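(* Let $(A,\mathrm{d}_A),(B,\mathrm{d}_B),Y,Z,h_A,h_B$ be homotopy data with bimodule structure, and let $(B,m^{\mathrm{ht}}_n)$ be the homotopy transfer $A_\infty$-algebra on $B$. Suppose that $h_A$ satisfies the left-side condition $h_A\circ Z=0$. Then $m^{\mathrm{ht}}_n=0$ for all $n>2$, i.e. $(B,\mathrm{d}_B,m_2^{\mathrm{ht}})$ is a differential graded associative algebra.
   Context: All vector spaces are $\mathbb{Z}$-graded over a field $\Bbbk$ of characteristic zero. Homotopy data with bimodule structure consists of: cochain complexes $(A,\mathrm{d}_A)$, $(B,\mathrm{d}_B)$; degree-$0$ cochain maps $Y\colon A\to B$, $Z\colon B\to A$; degree $-1$ maps $h_A\colon A\to A$, $h_B\colon B\to B$ with $\mathbb{1}_A-Z\circ Y=\mathrm{d}_A h_A+h_A\mathrm{d}_A$ and $\mathbb{1}_B-Y\circ Z=\mathrm{d}_B h_B+h_B\mathrm{d}_B$; such that (1) $(A,\wedge,\mathrm{d}_A)$ is a differential graded associative algebra; (2) $\mathrm{Im}(Z)$ is a subring of $A$ and $B$ is a differential graded bimodule over $\mathrm{Im}(Z)$, with left action $Z(b)\rhd b'$ and right action $b\lhd Z(b')$ satisfying $Z(b)\rhd(Z(b')\rhd b'')=(Z(b)\wedge Z(b'))\rhd b''$, $(b\lhd Z(b'))\lhd Z(b'')=b\lhd(Z(b')\wedge Z(b''))$, and the graded Leibniz rules $\mathrm{d}_B(Z(b)\rhd b')=Z(\mathrm{d}_Bb)\rhd b'+(-1)^{|b|}Z(b)\rhd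 \mathrm{d}_Bb'$, $\mathrm{d}_B(b\lhd Z(b'))=\mathrm{d}_Bb\lhd Z(b')+(-1)^{|b|}b\lhd Z(\mathrm{d}_Bb')$; (3) $Y,Z$ are $\mathrm{Im}(Z)$-bimodule homomorphisms: $Y(Z(b)\wedge a)=Z(b)\rhd Y(a)$, $Y(a\wedge Z(b))=Y(a)\lhd Z(b)$, $Z(Z(b)\rhd b')=Z(b)\wedge Z(b')$, $Z(b\lhd Z(b'))=Z(b)\wedge Z(b')$ for all $a\in A$, $b,b'\in B$. An $A_\infty$-algebra is $(B,\{m_n\}_{n\ge1})$ with $m_n\colon B^{\otimes n}\to B$ of degree $2-n$ satisfying $\sum_{r+s+t=n}(-1)^{r+st}m_{r+t+1}(\mathbb{1}^{\otimes r}\otimes m_s\otimes\mathbb{1}^{\otimes t})=0$ for all $n\ge1$. The homotopy transfer $A_\infty$-algebra $(B,m_n^{\mathrm{ht}})$ is the one given by the homotopy transfer theorem (Kadeishvili) from the dga $A$ via $Y,Z,h_A$: $m_1^{\mathrm{ht}}=\mathrm{d}_B$, $m_2^{\mathrm{ht}}=Y\circ\wedge\circ(Z\otimes Z)$, $m_3^{\mathrm{ht}}(b\otimes b'\otimes b'')=Y\big(Z(b)\wedge h_A(Z(b')\wedge Z(b''))-h_A(Z(b)\wedge Z(b'))\wedge Z(b'')\big)$, and in general $m_n^{\mathrm{ht}}$ is a signed sum over planar binary rooted trees with $n$ leaves of the composite with $Z$ on the leaves, $\wedge$ at the vertices, $h_A$ on internal edges and $Y$ at the root. *)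

theory Defs
  imports Complex_Main
begin

text \<open>A Z-graded vector space is modelled by a carrier type 'a with a scalar
multiplication s over a field 'k, and a family G of subspaces (G n = degree-n part)
such that 'a is their (internal) direct sum.\<close>

definition sgnx :: "int \<Rightarrow> 'a::ab_group_add \<Rightarrow> 'a" where
  "sgnx p x = (if even p then x else - x)"

definition graded_space :: "('k::field \<Rightarrow> 'a::ab_group_add \<Rightarrow> 'a) \<Rightarrow> (int \<Rightarrow> 'a set) \<Rightarrow> bool" where
  "graded_space s G \<longleftrightarrow>
     vector_space s \<and>
     (\<forall>n. 0 \<in> G n \<and> (\<forall>x\<in>G n. \<forall>y\<in>G n. x + y \<in> G n) \<and> (\<forall>c. \<forall>x\<in>G n. s c x \<in> G n)) \<and>
     (\<forall>x. \<exists>I c. finite I \<and> (\<forall>n\<in>I. c n \<in> G n) \<and> x = (\<Sum>n\<in>I. c n)) \<and>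
     (\<forall>I c. finite I \<longrightarrow> (\<forall>n\<in>I. c n \<in> G n) \<longrightarrow> (\<Sum>n\<in>I. c n) = 0 \<longrightarrow> (\<forall>n\<in>I. c n = 0))"

definition graded_map ::
  "('k::field \<Rightarrow> 'a::ab_group_add \<Rightarrow> 'a) \<Rightarrow> (int \<Rightarrow> 'a set) \<Rightarrow>
   ('k \<Rightarrow> 'b::ab_group_add \<Rightarrow> 'b) \<Rightarrow> (int \<Rightarrow> 'b set) \<Rightarrow> int \<Rightarrow> ('a \<Rightarrow> 'b) \<Rightarrow> bool" where
  "graded_map sA GA sB GB d f \<longleftrightarrow>
     Vector_Spaces.linear sA sB f \<and> (\<forall>n x. x \<in> GA n \<longrightarrow> f x \<in> GB (n + d))"

definition cochain_complex :: "('k::field \<Rightarrow> 'a::ab_group_add \<Rightarrow> 'a) \<Rightarrow> (int \<Rightarrow> 'a set) \<Rightarrow> ('a \<Rightarrow> 'a) \<Rightarrow> bool" where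
  "cochain_complex s G d \<longleftrightarrow> graded_space s G \<and> graded_map s G s G 1 d \<and> (\<forall>x. d (d x) = 0)"

definition dga :: "('k::field \<Rightarrow> 'a::ab_group_add \<Rightarrow> 'a) \<Rightarrow> (int \<Rightarrow> 'a set) \<Rightarrow> ('a \<Rightarrow> 'a \<Rightarrow> 'a) \<Rightarrow> ('a \<Rightarrow> 'a) \<Rightarrow> bool" where
  "dga s G mult d \<longleftrightarrow>
     cochain_complex s G d \<and>
     (\<forall>x. Vector_Spaces.linear s s (mult x)) \<and>
     (\<forall>y. Vector_Spaces.linear s s (\<lambda>x. mult x y)) \<and>
     (\<forall>p q x y. x \<in> G p \<longrightarrow> y \<in> G q \<longrightarrow> mult x y \<in> G (p + q)) \<and>
     (\<forall>x y z. mult (mult x y) z = mult x (mult y z)) \<and>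
     (\<forall>p x y. x \<in> G p \<longrightarrow> d (mult x y) = mult (d x) y + sgnx p (mult x (d y)))"

definition homotopy_data_bimod ::
  "('k::field \<Rightarrow> 'a::ab_group_add \<Rightarrow> 'a) \<Rightarrow> (int \<Rightarrow> 'a set) \<Rightarrow> ('a \<Rightarrow> 'a) \<Rightarrow>
   ('k \<Rightarrow> 'b::ab_group_add \<Rightarrow> 'b) \<Rightarrow> (int \<Rightarrow> 'b set) \<Rightarrow> ('b \<Rightarrow> 'b) \<Rightarrow>
   ('a \<Rightarrow> 'b) \<Rightarrow> ('b \<Rightarrow> 'a) \<Rightarrow> ('a \<Rightarrow> 'a) \<Rightarrow> ('b \<Rightarrow> 'b) \<Rightarrow>
   ('a \<Rightarrow> 'a \<Rightarrow> 'a) \<Rightarrow> ('a \<Rightarrow> 'b \<Rightarrow> 'b) \<Rightarrow> ('b \<Rightarrow> 'a \<Rightarrow> 'b) \<Rightarrow> bool" where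
  "homotopy_data_bimod sA GA dA sB GB dB Y Z hA hB mult lact ract \<longleftrightarrow>
     \<comment> \<open>cochain complexes and homotopy data\<close>
     cochain_complex sA GA dA \<and> cochain_complex sB GB dB \<and>
     graded_map sA GA sB GB 0 Y \<and> graded_map sB GB sA GA 0 Z \<and>
     (\<forall>a. Y (dA a) = dB (Y a)) \<and> (\<forall>b. Z (dB b) = dA (Z b)) \<and>
     graded_map sA GA sA GA (-1) hA \<and> graded_map sB GB sB GB (-1) hB \<and>
     (\<forall>a. a - Z (Y a) = dA (hA a) + hA (dA a)) \<and>
     (\<forall>b. b - Y (Z b) = dB (hB b) + hB (dB b)) \<and>
     \<comment> \<open>(1) A is a dga\<close>
     dga sA GA mult dA \<and>
     \<comment> \<open>(2) Im Z is a subring, B is a dg bimodule over Im Z\<close>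
     (\<forall>b b'. \<exists>c. mult (Z b) (Z b') = Z c) \<and>
     (\<forall>b. Vector_Spaces.linear sB sB (lact (Z b))) \<and>
     (\<forall>b'. Vector_Spaces.linear sB sB (\<lambda>b. lact (Z b) b')) \<and>
     (\<forall>b. Vector_Spaces.linear sB sB (\<lambda>b'. ract b' (Z b))) \<and>
     (\<forall>b'. Vector_Spaces.linear sB sB (\<lambda>b. ract b' (Z b))) \<and>
     (\<forall>p q b b'. b \<in> GB p \<longrightarrow> b' \<in> GB q \<longrightarrow>
        lact (Z b) b' \<in> GB (p + q) \<and> ract b (Z b') \<in> GB (p + q)) \<and>
     (\<forall>b b' b''. lact (Z b) (lact (Z b') b'') = lact (mult (Z b) (Z b')) b'') \<and>
     (\<forall>b b' b''. ract (ract b (Z b')) (Z b'') = ract b (mult (Z b') (Z b''))) \<and>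
     (\<forall>b b' b''. ract (lact (Z b) b') (Z b'') = lact (Z b) (ract b' (Z b''))) \<and>
     (\<forall>p b b'. b \<in> GB p \<longrightarrow>
        dB (lact (Z b) b') = lact (Z (dB b)) b' + sgnx p (lact (Z b) (dB b'))) \<and>
     (\<forall>p b b'. b \<in> GB p \<longrightarrow>
        dB (ract b (Z b')) = ract (dB b) (Z b') + sgnx p (ract b (Z (dB b')))) \<and>
     \<comment> \<open>(3) Y and Z are Im Z-bimodule homomorphisms\<close>
     (\<forall>a b. Y (mult (Z b) a) = lact (Z b) (Y a)) \<and>
     (\<forall>a b. Y (mult a (Z b)) = ract (Y a) (Z b)) \<and>
     (\<forall>b b'. Z (lact (Z b) b') = mult (Z b) (Z b')) \<and>
     (\<forall>b b'. Z (ract b (Z b')) = mult (Z b) (Z b'))"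

datatype ptree = Leaf | Node ptree ptree

fun leaves :: "ptree \<Rightarrow> nat" where
  "leaves Leaf = 1"
| "leaves (Node l r) = leaves l + leaves r"

text \<open>Value in A of a planar binary rooted tree on inputs bs (read left to right):
Z on leaves, mult at vertices, hA on internal edges (no operator at the root).\<close>
fun tval :: "('b \<Rightarrow> 'a) \<Rightarrow> ('a \<Rightarrow> 'a \<Rightarrow> 'a) \<Rightarrow> ('a \<Rightarrow> 'a) \<Rightarrow> ptree \<Rightarrow> 'b list \<Rightarrow> 'a" where
  "tval Z mult h Leaf bs = Z (hd bs)"
| "tval Z mult h (Node l r) bs =
     mult ((if l = Leaf then id else h) (tval Z mult h l (take (leaves l) bs)))
          ((if r = Leaf then id else h) (tval Z mult h r (drop (leaves l) bs)))"

text \<open>m^ht_n evaluated on b_1 (x) ... (x) b_n (given as a list of length n);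
the tree t on inputs bs carries the sign (-1)^(sigma t bs).\<close>
definition mht :: "('b::ab_group_add \<Rightarrow> 'b) \<Rightarrow> ('a::ab_group_add \<Rightarrow> 'b) \<Rightarrow> ('b \<Rightarrow> 'a) \<Rightarrow>
    ('a \<Rightarrow> 'a \<Rightarrow> 'a) \<Rightarrow> ('a \<Rightarrow> 'a) \<Rightarrow> (ptree \<Rightarrow> 'b list \<Rightarrow> int) \<Rightarrow> nat \<Rightarrow> 'b list \<Rightarrow> 'b" where
  "mht dB Y Z mult hA \<sigma> n bs =
     (if n = 1 then dB (hd bs)
      else Y (\<Sum>t\<in>{t. leaves t = n}. sgnx (\<sigma> t bs) (tval Z mult hA t bs)))"

end

theory Submission
  imports Defs
begin

text \<open>Since \<open>h\<^sub>A \<circ> Z = 0\<close> and \<open>Im Z\<close> is closed under the product, the value of every tree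
lies in \<open>Im Z\<close>. A tree with at least three leaves has an internal edge, on which \<open>h\<^sub>A\<close>
annihilates that value, so all higher operations vanish. The remaining product
\<open>m\<^sub>2(b, b') = Y(Z b \<cdot> Z b')\<close> inherits associativity from \<open>A\<close> because the homotopy
relation collapses to \<open>Z \<circ> Y \<circ> Z = Z\<close>, and the Leibniz rule because \<open>Y\<close> and \<open>Z\<close> are
chain maps.\<close>

lemma linear_map_0:
  assumes "Vector_Spaces.linear s1 s2 f" shows "f 0 = 0"
proof -
  interpret Vector_Spaces.linear s1 s2 f by fact
  show ?thesis by simp
qed

lemma linear_map_add:
  assumes "Vector_Spaces.linear s1 s2 f" shows "f (x + y) = f x + f y"
proof -
  interpret Vector_Spaces.linear s1 s2 f by fact
  show ?thesis by (rule add)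
qed

lemma linear_map_sgnx:
  assumes "Vector_Spaces.linear s1 s2 f" shows "f (sgnx p x) = sgnx p (f x)"
proof -
  interpret Vector_Spaces.linear s1 s2 f by fact
  show ?thesis by (simp add: sgnx_def neg)
qed

lemma leaves_ge_1: "leaves t \<ge> 1"
  by (induction t) auto

lemma leaves_eq_1_iff: "leaves t = 1 \<longleftrightarrow> t = Leaf"
proof (cases t)
  case (Node l r)
  then show ?thesis using leaves_ge_1[of l] leaves_ge_1[of r] by simp
qed simp

lemma leaves_eq_2_iff: "leaves t = 2 \<longleftrightarrow> t = Node Leaf Leaf"
proof (cases t)
  case (Node l r)
  then show ?thesis
    using leaves_ge_1[of l] leaves_ge_1[of r] leaves_eq_1_iff[of l] leaves_eq_1_iff[of r] by auto
qed simp

lemma tval_in_range: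
  assumes mult_closed: "\<And>b b'. mult (Z b) (Z b') \<in> range Z"
    and h_closed: "\<And>b. h (Z b) \<in> range Z"
  shows "tval Z mult h t bs \<in> range Z"
proof (induction t arbitrary: bs)
  case (Node l r)
  have "(if t = Leaf then id else h) (Z c) \<in> range Z" for t c
    using h_closed by auto
  with Node.IH obtain c c' where
    "(if l = Leaf then id else h) (tval Z mult h l (take (leaves l) bs)) = Z c"
    "(if r = Leaf then id else h) (tval Z mult h r (drop (leaves l) bs)) = Z c'"
    by (metis imageE)
  then show ?case using mult_closed by simp
qed simp

lemma tval_eq_0:
  assumes mult_closed: "\<And>b b'. mult (Z b) (Z b') \<in> range Z"
    and h_Z: "\<And>b. h (Z b) = 0"
    and "Z 0 = 0"
    and mult_0: "\<And>x. mult x 0 = 0" "\<And>y. mult 0 y = 0"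
    and "leaves t > 2"
  shows "tval Z mult h t bs = 0"
proof -
  have "h (Z b) \<in> range Z" for b
    using h_Z \<open>Z 0 = 0\<close> by (metis rangeI)
  then have h_kills_tval: "h (tval Z mult h u cs) = 0" for u cs
    using tval_in_range[of mult Z h u cs] mult_closed h_Z by auto
  obtain l r where t: "t = Node l r" and "l \<noteq> Leaf \<or> r \<noteq> Leaf"
    using \<open>leaves t > 2\<close> by (cases t) fastforce+
  then show ?thesis using h_kills_tval mult_0 by auto
qed

lemma mht_eq_0:
  assumes "Y 0 = 0"
    and "\<And>b b'. mult (Z b) (Z b') \<in> range Z"
    and "\<And>b. h (Z b) = 0"
    and "Z 0 = 0"
    and "\<And>x. mult x 0 = 0" "\<And>y. mult 0 y = 0"
    and "n > 2"
  shows "mht dB Y Z mult h \<sigma> n bs = 0"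
proof -
  have "(\<Sum>t\<in>{t. leaves t = n}. sgnx (\<sigma> t bs) (tval Z mult h t bs)) = 0"
    by (rule sum.neutral) (use assms tval_eq_0[of mult Z h] in \<open>auto simp: sgnx_def\<close>)
  then show ?thesis using assms by (simp add: mht_def)
qed

lemma mht_2:
  assumes "even (\<sigma> (Node Leaf Leaf) [b, b'])"
  shows "mht dB Y Z mult h \<sigma> 2 [b, b'] = Y (mult (Z b) (Z b'))"
proof -
  have "{t. leaves t = 2} = {Node Leaf Leaf}" using leaves_eq_2_iff by auto
  then show ?thesis using assms by (simp add: mht_def sgnx_def)
qed

lemma Z_Y_Z_eq:
  fixes Z :: "'b \<Rightarrow> 'a::ab_group_add"
  assumes homotopy: "\<And>a. a - Z (Y a) = dA (hA a) + hA (dA a)"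
    and Z_chain: "\<And>b. Z (dB b) = dA (Z b)"
    and "dA 0 = 0"
    and h_Z: "\<And>b. hA (Z b) = 0"
  shows "Z (Y (Z b)) = Z b"
proof -
  have "Z b - Z (Y (Z b)) = dA (hA (Z b)) + hA (Z (dB b))"
    using homotopy Z_chain by simp
  also have "\<dots> = 0" using h_Z \<open>dA 0 = 0\<close> by simp
  finally show ?thesis by simp
qed

lemma dga_mult_0:
  assumes "dga s G mult d" shows "mult x 0 = 0" "mult 0 y = 0"
  using assms linear_map_0 unfolding dga_def by metis+

lemma dga_differential_0:
  assumes "dga s G mult d" shows "d 0 = 0"
  using assms linear_map_0 unfolding dga_def cochain_complex_def graded_map_def by blast

context
  fixes sA :: "'k::field \<Rightarrow> 'a::ab_group_add \<Rightarrow> 'a"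
    and sB :: "'k \<Rightarrow> 'b::ab_group_add \<Rightarrow> 'b"
    and GA :: "int \<Rightarrow> 'a set" and GB :: "int \<Rightarrow> 'b set"
    and dA hA :: "'a \<Rightarrow> 'a" and dB hB :: "'b \<Rightarrow> 'b"
    and Y :: "'a \<Rightarrow> 'b" and Z :: "'b \<Rightarrow> 'a"
    and mult :: "'a \<Rightarrow> 'a \<Rightarrow> 'a" and lact :: "'a \<Rightarrow> 'b \<Rightarrow> 'b" and ract :: "'b \<Rightarrow> 'a \<Rightarrow> 'b"
  assumes H: "homotopy_data_bimod sA GA dA sB GB dB Y Z hA hB mult lact ract"
begin

lemma homotopy_data_bimod_dga: "dga sA GA mult dA"
  using H unfolding homotopy_data_bimod_def by blast

lemma homotopy_data_bimod_linear_Y: "Vector_Spaces.linear sA sB Y"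
  using H unfolding homotopy_data_bimod_def graded_map_def by blast

lemma homotopy_data_bimod_Z_graded: "b \<in> GB p \<Longrightarrow> Z b \<in> GA p"
  using H unfolding homotopy_data_bimod_def graded_map_def by (metis add_0_right)

lemma homotopy_data_bimod_Y_chain: "Y (dA a) = dB (Y a)"
  using H unfolding homotopy_data_bimod_def by (elim conjE) blast

lemma homotopy_data_bimod_Z_chain: "Z (dB b) = dA (Z b)"
  using H unfolding homotopy_data_bimod_def by (elim conjE) blast

lemma homotopy_data_bimod_linear_Z: "Vector_Spaces.linear sB sA Z"
  using H unfolding homotopy_data_bimod_def graded_map_def by blast

lemma homotopy_data_bimod_homotopy_A: "a - Z (Y a) = dA (hA a) + hA (dA a)"
  using H unfolding homotopy_data_bimod_def by (elim conjE) blast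

lemma homotopy_data_bimod_mult_closed: "mult (Z b) (Z b') \<in> range Z"
  using H unfolding homotopy_data_bimod_def by (metis rangeI)

end

theorem proposition2p4:
  fixes sA :: "'k::field_char_0 \<Rightarrow> 'a::ab_group_add \<Rightarrow> 'a"
    and sB :: "'k \<Rightarrow> 'b::ab_group_add \<Rightarrow> 'b"
    and GA :: "int \<Rightarrow> 'a set" and GB :: "int \<Rightarrow> 'b set"
    and dA hA :: "'a \<Rightarrow> 'a" and dB hB :: "'b \<Rightarrow> 'b"
    and Y :: "'a \<Rightarrow> 'b" and Z :: "'b \<Rightarrow> 'a"
    and mult :: "'a \<Rightarrow> 'a \<Rightarrow> 'a" and lact :: "'a \<Rightarrow> 'b \<Rightarrow> 'b" and ract :: "'b \<Rightarrow> 'a \<Rightarrow> 'b"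
    and \<sigma> :: "ptree \<Rightarrow> 'b list \<Rightarrow> int"
  assumes H: "homotopy_data_bimod sA GA dA sB GB dB Y Z hA hB mult lact ract"
    and sign2: "\<And>bs. even (\<sigma> (Node Leaf Leaf) bs)"
    and sign3a: "\<And>bs. even (\<sigma> (Node Leaf (Node Leaf Leaf)) bs)"
    and sign3b: "\<And>bs. odd (\<sigma> (Node (Node Leaf Leaf) Leaf) bs)"
    and left: "\<And>b. hA (Z b) = 0"
  shows "(\<forall>n bs. n > 2 \<longrightarrow> length bs = n \<longrightarrow> mht dB Y Z mult hA \<sigma> n bs = 0)
     \<and> (\<forall>b b' b''. mht dB Y Z mult hA \<sigma> 2 [mht dB Y Z mult hA \<sigma> 2 [b, b'], b''] =
                    mht dB Y Z mult hA \<sigma> 2 [b, mht dB Y Z mult hA \<sigma> 2 [b', b'']])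
     \<and> (\<forall>p b b'. b \<in> GB p \<longrightarrow>
          dB (mht dB Y Z mult hA \<sigma> 2 [b, b']) =
            mht dB Y Z mult hA \<sigma> 2 [dB b, b'] + sgnx p (mht dB Y Z mult hA \<sigma> 2 [b, dB b']))"
proof (intro conjI allI impI)
  \<comment> \<open>The signs of the three-leaf trees are irrelevant: those trees vanish.\<close>
  note closed = homotopy_data_bimod_mult_closed[OF H]
  note dga = homotopy_data_bimod_dga[OF H]
  have linY: "Vector_Spaces.linear sA sB Y" by (rule homotopy_data_bimod_linear_Y[OF H])
  have Z_0: "Z 0 = 0" by (rule linear_map_0[OF homotopy_data_bimod_linear_Z[OF H]])
  have m2: "mht dB Y Z mult hA \<sigma> 2 [b, b'] = Y (mult (Z b) (Z b'))" for b b'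
    using mht_2 sign2 by blast
  show "mht dB Y Z mult hA \<sigma> n bs = 0" if "n > 2" for n bs
    using mht_eq_0 linear_map_0[OF linY] closed left Z_0 dga_mult_0[OF dga] that by metis
  have ZYZ: "Z (Y (Z b)) = Z b" for b
    using Z_Y_Z_eq homotopy_data_bimod_homotopy_A[OF H] homotopy_data_bimod_Z_chain[OF H]
      dga_differential_0[OF dga] left by metis
  have ZY_mult: "Z (Y (mult (Z b) (Z b'))) = mult (Z b) (Z b')" for b b'
    using closed[of b b'] ZYZ by auto
  show "mht dB Y Z mult hA \<sigma> 2 [mht dB Y Z mult hA \<sigma> 2 [b, b'], b''] =
        mht dB Y Z mult hA \<sigma> 2 [b, mht dB Y Z mult hA \<sigma> 2 [b', b'']]" for b b' b''
    using dga by (simp add: m2 ZY_mult dga_def)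
  show "dB (mht dB Y Z mult hA \<sigma> 2 [b, b']) =
        mht dB Y Z mult hA \<sigma> 2 [dB b, b'] + sgnx p (mht dB Y Z mult hA \<sigma> 2 [b, dB b'])"
    if "b \<in> GB p" for p b b'
  proof -
    have "dA (mult (Z b) (Z b')) = mult (dA (Z b)) (Z b') + sgnx p (mult (Z b) (dA (Z b')))"
      using dga homotopy_data_bimod_Z_graded[OF H that]
      unfolding dga_def by blast
    then show ?thesis
      by (simp add: m2 homotopy_data_bimod_Y_chain[OF H, symmetric] homotopy_data_bimod_Z_chain[OF H]
          linear_map_add[OF linY] linear_map_sgnx[OF linY])
  qed
qed

end
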